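(* Consider, for a parameter $a$, the ODE in $z$ $$a^2\bigl(z(1+A)^3-A\bigr)=(1+A)\,\delta_z^2A-(\delta_zA)^2,\qquad \delta_z=z\frac{d}{dz},$$ and the formal series $A(a,z)=\sum_{k=0}^\infty A_k(z)\,a^{-2k}$. There exists a unique sequence $(A_k(z))_{k\ge0}$ of functions holomorphic in the disc $|z|<\frac{2^2}{3^3}$ such that this series formally solves the ODE (i.e. the ODE holds identically after equating coefficients of each power of $a^2$). Moreover, all $A_k(z)$ are rational functions of $A_0(z)$, and $A_k(0)=0$ for all $k$. *)

theory Defs
  imports "HOL-Analysis.Analysis" "HOL-Computational_Algebra.Formal_Power_Series"
          "HOL-Computational_Algebra.Polynomial"
begin

definition euler_op :: "(complex \<Rightarrow> complex) \<Rightarrow> complex \<Rightarrow> complex" where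
  "euler_op f z = z * deriv f z"

text \<open>The formal series A(a,z) = sum_k A_k(z) a^(-2k) is encoded, for each fixed z,
  as a formal power series in the variable X = a^(-2).  Multiplying the ODE
  a^2 (z(1+A)^3 - A) = (1+A) delta^2 A - (delta A)^2 by X = a^(-2) gives
  z(1+A)^3 - A = X ((1+A) delta^2 A - (delta A)^2), to be read coefficientwise.\<close>
definition formally_solves_ODE :: "(nat \<Rightarrow> complex \<Rightarrow> complex) \<Rightarrow> real \<Rightarrow> bool" where
  "formally_solves_ODE A r \<longleftrightarrow>
     (\<forall>z \<in> ball 0 r.
        (let F  = Abs_fps (\<lambda>k. A k z);
             D1 = Abs_fps (\<lambda>k. euler_op (A k) z);
             D2 = Abs_fps (\<lambda>k. euler_op (euler_op (A k)) z)
         in fps_const z * (1 + F) ^ 3 - F = fps_X * ((1 + F) * D2 - D1 ^ 2)))"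

definition admissible :: "(nat \<Rightarrow> complex \<Rightarrow> complex) \<Rightarrow> bool" where
  "admissible A \<longleftrightarrow>
     (\<forall>k. A k holomorphic_on ball 0 (2^2 / 3^3)) \<and> formally_solves_ODE A (2^2 / 3^3)"

end

(*
  The coefficient of a^2 in the equation says A_0 = z (1 + A_0)^3. Any solution continuous at 0
  satisfies A_0(0) = 0, and for |z| < 4/27 the map w \<mapsto> z (1 + w)^3 is a contraction of the disc
  |w| \<le> 1/2, so by analytic continuation A_0 is the branch obtained by fixed-point iteration.
  The coefficient of a^(-2k) is affine in A_(k+1) with slope 3 z (1 + A_0)^2 - 1 = (2 A_0 - 1)/(1 + A_0),
  which does not vanish on the disc, and otherwise involves only A_0, ..., A_k and their Euler
  derivatives; hence A_(k+1) is determined recursively, which gives existence and uniqueness.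
  Rationality in A_0 propagates through the recursion because z = A_0 / (1 + A_0)^3 and
  z A_0' = A_0 (1 + A_0) / (1 - 2 A_0). At z = 0 the Euler operator vanishes and the equation
  collapses to \<Sum> A_k(0) a^(-2k) = 0.
*)

theory Submission
  imports Defs "HOL-Complex_Analysis.Conformal_Mappings"
begin

unbundle no vec_syntax
unbundle fps_syntax

section \<open>The branch of \<open>w = z (1 + w)^3\<close> vanishing at the origin\<close>

lemma norm_cube_diff_le:
  fixes a b :: "'a::real_normed_field"
  assumes "norm a \<le> 1/2" "norm b \<le> 1/2"
  shows "norm ((1 + a)^3 - (1 + b)^3) \<le> 27/4 * norm (a - b)"
proof -
  have factor: "(1 + a)^3 - (1 + b)^3 = (a - b) * ((1 + a)^2 + (1 + a) * (1 + b) + (1 + b)^2)"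
    by (simp add: algebra_simps power2_eq_square power3_eq_cube)
  have "norm (1 + a) \<le> 3/2" "norm (1 + b) \<le> 3/2"
    using norm_triangle_ineq[of 1 a] norm_triangle_ineq[of 1 b] assms by simp_all
  then have "norm ((1 + a)^2) + norm ((1 + a) * (1 + b)) + norm ((1 + b)^2)
      \<le> (3/2)^2 + (3/2) * (3/2) + (3/2)^2"
    unfolding norm_mult norm_power by (intro add_mono power_mono mult_mono) auto
  then have "norm ((1 + a)^2 + (1 + a) * (1 + b) + (1 + b)^2) \<le> 27/4"
    using norm_triangle_ineq[of "(1 + a)^2 + (1 + a) * (1 + b)" "(1 + b)^2"]
      norm_triangle_ineq[of "(1 + a)^2" "(1 + a) * (1 + b)"]
    by (simp add: power2_eq_square)
  then show ?thesis
    unfolding factor norm_mult by (metis mult.commute mult_left_mono norm_ge_zero)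
qed

primrec cubic_branch_iter :: "nat \<Rightarrow> complex \<Rightarrow> complex" where
  "cubic_branch_iter 0 z = 0"
| "cubic_branch_iter (Suc n) z = z * (1 + cubic_branch_iter n z)^3"

definition cubic_branch :: "complex \<Rightarrow> complex" where
  "cubic_branch z = lim (\<lambda>n. cubic_branch_iter n z)"

lemma norm_cubic_branch_iter_le:
  "norm z \<le> 4/27 \<Longrightarrow> norm (cubic_branch_iter n z) \<le> 1/2"
proof (induction n)
  case (Suc n)
  have "norm (1 + cubic_branch_iter n z) \<le> 3/2"
    using norm_triangle_ineq[of 1 "cubic_branch_iter n z"] Suc by simp
  then have "norm z * norm (1 + cubic_branch_iter n z)^3 \<le> 4/27 * (3/2)^3"
    using Suc.prems by (intro mult_mono power_mono) auto
  then show ?case by (simp add: norm_mult norm_power power3_eq_cube)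
qed simp

lemma norm_cubic_branch_iter_diff_le:
  assumes "norm z \<le> r" "r \<le> 4/27"
  shows "norm (cubic_branch_iter (Suc n) z - cubic_branch_iter n z) \<le> 1/2 * (27/4 * r)^n"
proof (induction n)
  case (Suc n)
  let ?w = "cubic_branch_iter"
  have r: "0 \<le> r" using assms(1) norm_ge_zero order_trans by blast
  have bound: "norm (?w m z) \<le> 1/2" for m
    using assms by (intro norm_cubic_branch_iter_le) simp
  have "norm (?w (Suc (Suc n)) z - ?w (Suc n) z)
      = norm z * norm ((1 + ?w (Suc n) z)^3 - (1 + ?w n z)^3)"
    by (simp only: cubic_branch_iter.simps(2) norm_mult right_diff_distrib[symmetric])
  also have "\<dots> \<le> r * (27/4 * norm (?w (Suc n) z - ?w n z))"
    using assms(1) r by (intro mult_mono norm_cube_diff_le bound) auto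
  also have "\<dots> \<le> r * (27/4 * (1/2 * (27/4 * r)^n))"
    using Suc r by (intro mult_left_mono) auto
  finally show ?case by (simp add: algebra_simps)
qed (use assms in simp)

lemma holomorphic_cubic_branch_iter: "cubic_branch_iter n holomorphic_on S"
  by (induction n) (auto intro!: holomorphic_intros)

lemma uniform_limit_cubic_branch_iter:
  assumes "0 \<le> r" "r < 4/27"
  shows "uniform_limit (cball 0 r) cubic_branch_iter cubic_branch sequentially"
proof -
  let ?w = "cubic_branch_iter"
  have "uniform_limit (cball 0 r) (\<lambda>n z. \<Sum>i<n. ?w (Suc i) z - ?w i z)
          (\<lambda>z. \<Sum>i. ?w (Suc i) z - ?w i z) sequentially"
    using assms norm_cubic_branch_iter_diff_le
    by (intro Weierstrass_m_test[where M = "\<lambda>n. 1/2 * (27/4 * r)^n"])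
       (auto intro!: summable_mult summable_geometric)
  moreover have "(\<lambda>n z. \<Sum>i<n. ?w (Suc i) z - ?w i z) = ?w"
    using sum_lessThan_telescope[of "\<lambda>i. ?w i _"]
    by (simp add: fun_eq_iff del: cubic_branch_iter.simps(2))
  ultimately have lim:
    "uniform_limit (cball 0 r) ?w (\<lambda>z. \<Sum>i. ?w (Suc i) z - ?w i z) sequentially"
    by simp
  have "cubic_branch z = (\<Sum>i. ?w (Suc i) z - ?w i z)" if "z \<in> cball 0 r" for z
    unfolding cubic_branch_def using tendsto_uniform_limitI[OF lim that] by (rule limI)
  with lim show ?thesis
    by (subst uniform_limit_cong') auto
qed

lemma cubic_branch_iter_tendsto:
  "norm z < 4/27 \<Longrightarrow> (\<lambda>n. cubic_branch_iter n z) \<longlonglongrightarrow> cubic_branch z"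
  using tendsto_uniform_limitI[OF uniform_limit_cubic_branch_iter[of "norm z"]] by simp

lemma holomorphic_cubic_branch: "cubic_branch holomorphic_on ball 0 (4/27)"
proof (rule holomorphic_uniform_sequence[OF _ holomorphic_cubic_branch_iter])
  fix x :: complex assume "x \<in> ball 0 (4/27)"
  then have x: "norm x < 4/27" by simp
  define d where "d = (4/27 - norm x) / 2"
  have "cball x d \<subseteq> cball 0 (norm x + d)"
    by (simp add: cball_subset_cball_iff)
  moreover have "norm x + d < 4/27" "d > 0"
    using x by (simp_all add: d_def field_simps)
  moreover from this have "cball 0 (norm x + d) \<subseteq> ball (0::complex) (4/27)"
    by (simp add: cball_subset_ball_iff)
  ultimately show "\<exists>d>0. cball x d \<subseteq> ball 0 (4/27) \<and>
      uniform_limit (cball x d) cubic_branch_iter cubic_branch sequentially"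
    by (intro exI[of _ d] conjI uniform_limit_on_subset[OF uniform_limit_cubic_branch_iter]) auto
qed simp

lemma cubic_branch_eq:
  assumes "norm z < 4/27"
  shows "cubic_branch z = z * (1 + cubic_branch z)^3"
proof -
  have "(\<lambda>n. cubic_branch_iter (Suc n) z) \<longlonglongrightarrow> z * (1 + cubic_branch z)^3"
    unfolding cubic_branch_iter.simps by (intro tendsto_intros cubic_branch_iter_tendsto assms)
  with LIMSEQ_Suc[OF cubic_branch_iter_tendsto[OF assms]] show ?thesis
    by (rule LIMSEQ_unique)
qed

lemma norm_cubic_branch_le: "norm z < 4/27 \<Longrightarrow> norm (cubic_branch z) \<le> 1/2"
  using norm_cubic_branch_iter_le
  by (intro tendsto_upperbound[OF tendsto_norm[OF cubic_branch_iter_tendsto]]) auto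

lemma cubic_branch_unique:
  assumes "norm z < 4/27" "norm w \<le> 1/2" "w = z * (1 + w)^3"
  shows "w = cubic_branch z"
proof (rule ccontr)
  assume ne: "w \<noteq> cubic_branch z"
  have "norm (w - cubic_branch z) = norm z * norm ((1 + w)^3 - (1 + cubic_branch z)^3)"
    using assms(3) cubic_branch_eq[OF assms(1)] by (metis norm_mult right_diff_distrib)
  also have "\<dots> \<le> norm z * (27/4 * norm (w - cubic_branch z))"
    using assms norm_cubic_branch_le by (intro mult_left_mono norm_cube_diff_le) auto
  also have "\<dots> < 4/27 * (27/4 * norm (w - cubic_branch z))"
    using ne assms(1) by (intro mult_strict_right_mono) auto
  finally show False by simp
qed

lemma cubic_branch_neq_minus_one: "norm z < 4/27 \<Longrightarrow> 1 + cubic_branch z \<noteq> 0"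
  using norm_cubic_branch_le[of z] by (auto simp: add_eq_0_iff)

lemma cubic_branch_neq_half: "norm z < 4/27 \<Longrightarrow> 1 - 2 * cubic_branch z \<noteq> 0"
proof
  assume z: "norm z < 4/27" and "1 - 2 * cubic_branch z = 0"
  then have "cubic_branch z = 1/2" by (simp add: field_simps)
  with cubic_branch_eq[OF z] have "z = 4/27" by (simp add: field_simps power3_eq_cube)
  with z show False by simp
qed

lemma cubic_branch_linearization_neq_zero:
  "norm z < 4/27 \<Longrightarrow> 3 * z * (1 + cubic_branch z)^2 - 1 \<noteq> 0"
proof
  assume z: "norm z < 4/27" and "3 * z * (1 + cubic_branch z)^2 - 1 = 0"
  moreover have "3 * cubic_branch z = 3 * z * (1 + cubic_branch z)^2 * (1 + cubic_branch z)"
    by (subst cubic_branch_eq[OF z]) (simp add: power2_eq_square power3_eq_cube)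
  ultimately have "1 - 2 * cubic_branch z = 0"
    by simp
  with cubic_branch_neq_half[OF z] show False ..
qed

lemma cubic_branch_euler_op:
  assumes z: "norm z < 4/27"
  shows "euler_op cubic_branch z
           = cubic_branch z * (1 + cubic_branch z) / (1 - 2 * cubic_branch z)"
proof -
  define g where "g = cubic_branch z"
  define g' where "g' = deriv cubic_branch z"
  have deriv_g: "(cubic_branch has_field_derivative g') (at z)"
    using holomorphic_derivI[OF holomorphic_cubic_branch] z by (simp add: g'_def)
  have ev: "\<forall>\<^sub>F w in nhds z. cubic_branch w = w * (1 + cubic_branch w)^3"
    using eventually_nhds_in_open[of "ball 0 (4/27)" z] z
    by (auto elim!: eventually_mono intro: cubic_branch_eq)
  have "(cubic_branch has_field_derivative (1 + g)^3 + 3 * z * (1 + g)^2 * g') (at z)"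
    unfolding DERIV_cong_ev[OF refl ev refl] g_def using deriv_g
    by (auto intro!: derivative_eq_intros simp: algebra_simps)
  then have implicit: "g' = (1 + g)^3 + 3 * z * (1 + g)^2 * g'"
    using deriv_g DERIV_unique by blast
  have "z * g' * (1 - 2 * g) = g * (1 + g)"
    using implicit cubic_branch_eq[OF z, folded g_def] by algebra
  then show ?thesis
    using cubic_branch_neq_half[OF z] by (simp add: euler_op_def g_def g'_def eq_divide_eq)
qed

lemma holomorphic_eq_cubic_branch:
  assumes hol: "B holomorphic_on ball 0 (4/27)"
    and eq: "\<And>z. norm z < 4/27 \<Longrightarrow> B z = z * (1 + B z)^3"
    and z: "norm z < 4/27"
  shows "B z = cubic_branch z"
proof -
  have "continuous (at 0) B"
    using holomorphic_on_imp_continuous_on[OF hol] by (simp add: continuous_on_eq_continuous_at)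
  moreover have "B 0 = 0" using eq[of 0] by simp
  ultimately obtain d where d: "d > 0" "\<And>w. norm w < d \<Longrightarrow> norm (B w) < 1/2"
    unfolding continuous_at_eps_delta
    by (metis zero_less_divide_1_iff zero_less_numeral diff_zero dist_norm)
  have near_0: "B w = cubic_branch w" if "w \<in> ball 0 (min d (4/27))" for w
    using that d(2)[of w] eq[of w] by (intro cubic_branch_unique) auto
  show ?thesis
    by (rule analytic_continuation_open[where s = "ball 0 (min d (4/27))" and s' = "ball 0 (4/27)"])
       (use d(1) z hol holomorphic_cubic_branch near_0 in auto)
qed

section \<open>Functions rational in a given function\<close>

definition rational_in :: "('a \<Rightarrow> 'b::field) \<Rightarrow> 'a set \<Rightarrow> ('a \<Rightarrow> 'b) \<Rightarrow> bool" where
  "rational_in g S h \<longleftrightarrow> (\<exists>p q. \<forall>z\<in>S. poly q (g z) \<noteq> 0 \<and> h z = poly p (g z) / poly q (g z))"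

lemma rational_inI:
  "(\<And>z. z \<in> S \<Longrightarrow> poly q (g z) \<noteq> 0 \<and> h z = poly p (g z) / poly q (g z)) \<Longrightarrow> rational_in g S h"
  unfolding rational_in_def by blast

lemma rational_in_cong:
  "(\<And>z. z \<in> S \<Longrightarrow> g z = g' z) \<Longrightarrow> (\<And>z. z \<in> S \<Longrightarrow> h z = h' z) \<Longrightarrow>
     rational_in g S h \<longleftrightarrow> rational_in g' S h'"
  unfolding rational_in_def by (intro ex_cong1 ball_cong refl) auto

lemma rational_in_const: "rational_in g S (\<lambda>z. c)"
  by (rule rational_inI[where p = "[:c:]" and q = 1]) simp

lemma rational_in_self: "rational_in g S g"
  by (rule rational_inI[where p = "[:0, 1:]" and q = 1]) simp

lemma rational_in_add:
  assumes "rational_in g S f" "rational_in g S h"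
  shows "rational_in g S (\<lambda>z. f z + h z)"
proof -
  obtain p q p' q' where "\<forall>z\<in>S. poly q (g z) \<noteq> 0 \<and> f z = poly p (g z) / poly q (g z)"
    and "\<forall>z\<in>S. poly q' (g z) \<noteq> 0 \<and> h z = poly p' (g z) / poly q' (g z)"
    using assms(1,2) unfolding rational_in_def by blast
  then show ?thesis
    by (intro rational_inI[where p = "p * q' + p' * q" and q = "q * q'"]) (auto simp: field_simps)
qed

lemma rational_in_mult:
  assumes "rational_in g S f" "rational_in g S h"
  shows "rational_in g S (\<lambda>z. f z * h z)"
proof -
  obtain p q p' q' where "\<forall>z\<in>S. poly q (g z) \<noteq> 0 \<and> f z = poly p (g z) / poly q (g z)"
    and "\<forall>z\<in>S. poly q' (g z) \<noteq> 0 \<and> h z = poly p' (g z) / poly q' (g z)"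
    using assms(1,2) unfolding rational_in_def by blast
  then show ?thesis
    by (intro rational_inI[where p = "p * p'" and q = "q * q'"]) auto
qed

lemma rational_in_divide:
  assumes "rational_in g S f" "rational_in g S h" "\<And>z. z \<in> S \<Longrightarrow> h z \<noteq> 0"
  shows "rational_in g S (\<lambda>z. f z / h z)"
proof -
  obtain p q p' q' where "\<forall>z\<in>S. poly q (g z) \<noteq> 0 \<and> f z = poly p (g z) / poly q (g z)"
    and "\<forall>z\<in>S. poly q' (g z) \<noteq> 0 \<and> h z = poly p' (g z) / poly q' (g z)"
    using assms(1,2) unfolding rational_in_def by blast
  with assms(3) show ?thesis
    by (intro rational_inI[where p = "p * q'" and q = "q * p'"]) fastforce
qed

lemma rational_in_uminus: "rational_in g S f \<Longrightarrow> rational_in g S (\<lambda>z. - f z)"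
  using rational_in_mult[OF rational_in_const[of g S "-1"]] by simp

lemma rational_in_diff:
  "rational_in g S f \<Longrightarrow> rational_in g S h \<Longrightarrow> rational_in g S (\<lambda>z. f z - h z)"
  using rational_in_add[OF _ rational_in_uminus] by simp

lemma rational_in_power: "rational_in g S f \<Longrightarrow> rational_in g S (\<lambda>z. f z ^ n)"
  by (induction n) (auto intro: rational_in_const rational_in_mult)

lemma rational_in_sum:
  "(\<And>i. i \<in> I \<Longrightarrow> rational_in g S (f i)) \<Longrightarrow> rational_in g S (\<lambda>z. \<Sum>i\<in>I. f i z)"
  by (induction I rule: infinite_finite_induct) (auto intro: rational_in_const rational_in_add)

lemma holomorphic_on_rational_in:
  assumes "g holomorphic_on S" "rational_in g S h"
  shows "h holomorphic_on S"
proof -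
  obtain p q where pq: "\<forall>z\<in>S. poly q (g z) \<noteq> 0 \<and> h z = poly p (g z) / poly q (g z)"
    using assms(2) unfolding rational_in_def by blast
  with assms(1) have "(\<lambda>z. poly p (g z) / poly q (g z)) holomorphic_on S"
    by (auto intro!: holomorphic_intros)
  then show ?thesis
    by (rule holomorphic_transform) (use pq in auto)
qed

text \<open>By the chain rule \<open>z (p(g)/q(g))' = z g' (p' q - p q')(g) / q(g)^2\<close>.\<close>
lemma rational_in_euler_op:
  assumes S: "open S" and g: "g holomorphic_on S"
    and euler_g: "rational_in g S (euler_op g)" and h: "rational_in g S h"
  shows "rational_in g S (euler_op h)"
proof -
  obtain p q where "\<forall>z\<in>S. poly q (g z) \<noteq> 0 \<and> h z = poly p (g z) / poly q (g z)"
    using h unfolding rational_in_def by blast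
  then have q: "\<And>z. z \<in> S \<Longrightarrow> poly q (g z) \<noteq> 0"
    and h_eq: "\<And>z. z \<in> S \<Longrightarrow> h z = poly p (g z) / poly q (g z)"
    by auto
  define r where "r z = poly (pderiv p * q - p * pderiv q) (g z) / poly (q * q) (g z)" for z
  have euler_h: "euler_op h z = euler_op g z * r z" if z: "z \<in> S" for z
  proof -
    let ?g' = "deriv g z" and ?p = "poly p (g z)" and ?q = "poly q (g z)"
    have "((\<lambda>w. poly p (g w) / poly q (g w)) has_field_derivative
           (poly (pderiv p) (g z) * ?g' * ?q - ?p * (poly (pderiv q) (g z) * ?g')) / (?q * ?q)) (at z)"
      using q[OF z]
      by (intro DERIV_divide DERIV_chain'[OF holomorphic_derivI[OF g S z]] poly_DERIV) auto
    moreover have "\<forall>\<^sub>F w in nhds z. h w = poly p (g w) / poly q (g w)"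
      using eventually_nhds_in_open[OF S z] by (rule eventually_mono) (rule h_eq)
    then have "deriv h z = deriv (\<lambda>w. poly p (g w) / poly q (g w)) z"
      by (rule deriv_cong_ev) (rule refl)
    ultimately have
      "deriv h z = (poly (pderiv p) (g z) * ?g' * ?q - ?p * (poly (pderiv q) (g z) * ?g')) / (?q * ?q)"
      by (simp add: DERIV_imp_deriv)
    then show ?thesis
      by (simp add: euler_op_def r_def algebra_simps)
  qed
  have "rational_in g S r"
    using q unfolding r_def
    by (intro rational_inI[where p = "pderiv p * q - p * pderiv q" and q = "q * q"]) auto
  then have "rational_in g S (\<lambda>z. euler_op g z * r z)"
    by (rule rational_in_mult[OF euler_g])
  then show ?thesis
    by (rule rational_in_cong[THEN iffD1, rotated 2]) (simp_all add: euler_h)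
qed

definition rational_coeffs_in :: "('a \<Rightarrow> 'b::field) \<Rightarrow> 'a set \<Rightarrow> ('a \<Rightarrow> 'b fps) \<Rightarrow> bool" where
  "rational_coeffs_in g S F \<longleftrightarrow> (\<forall>n. rational_in g S (\<lambda>z. F z $ n))"

lemma rational_coeffs_in_one: "rational_coeffs_in g S (\<lambda>z. 1)"
  unfolding rational_coeffs_in_def by (auto simp: rational_in_const)

lemma rational_coeffs_in_fps_const:
  assumes "rational_in g S c"
  shows "rational_coeffs_in g S (\<lambda>z. fps_const (c z))"
  unfolding rational_coeffs_in_def
proof
  fix n
  show "rational_in g S (\<lambda>z. fps_const (c z) $ n)"
    using assms by (cases "n = 0") (simp_all add: rational_in_const)
qed

lemma rational_coeffs_in_add:
  "rational_coeffs_in g S F \<Longrightarrow> rational_coeffs_in g S G \<Longrightarrow>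
     rational_coeffs_in g S (\<lambda>z. F z + G z)"
  unfolding rational_coeffs_in_def by (auto intro: rational_in_add)

lemma rational_coeffs_in_diff:
  "rational_coeffs_in g S F \<Longrightarrow> rational_coeffs_in g S G \<Longrightarrow>
     rational_coeffs_in g S (\<lambda>z. F z - G z)"
  unfolding rational_coeffs_in_def by (auto intro: rational_in_diff)

lemma rational_coeffs_in_mult:
  "rational_coeffs_in g S F \<Longrightarrow> rational_coeffs_in g S G \<Longrightarrow>
     rational_coeffs_in g S (\<lambda>z. F z * G z)"
  unfolding rational_coeffs_in_def fps_mult_nth by (auto intro!: rational_in_sum rational_in_mult)

lemma rational_coeffs_in_power:
  "rational_coeffs_in g S F \<Longrightarrow> rational_coeffs_in g S (\<lambda>z. F z ^ n)"
  by (induction n) (auto intro: rational_coeffs_in_one rational_coeffs_in_mult)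

section \<open>Agreement of power series up to a given order\<close>

lemma fps_cutoff_add_cong:
  "fps_cutoff n f = fps_cutoff n f' \<Longrightarrow> fps_cutoff n g = fps_cutoff n g' \<Longrightarrow>
     fps_cutoff n (f + g) = fps_cutoff n (f' + g')"
  for f g :: "'a::monoid_add fps"
  by (simp add: fps_cutoff_add)

lemma fps_cutoff_diff_cong:
  "fps_cutoff n f = fps_cutoff n f' \<Longrightarrow> fps_cutoff n g = fps_cutoff n g' \<Longrightarrow>
     fps_cutoff n (f - g) = fps_cutoff n (f' - g')"
  for f g :: "'a::group_add fps"
  by (simp add: fps_cutoff_diff)

lemma fps_cutoff_mult_cong:
  fixes f g :: "'a::comm_semiring_1 fps"
  assumes "fps_cutoff n f = fps_cutoff n f'" "fps_cutoff n g = fps_cutoff n g'"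
  shows "fps_cutoff n (f * g) = fps_cutoff n (f' * g')"
proof -
  have "(f * g) $ k = (f' * g') $ k" if "k < n" for k
  proof -
    have "(f * g) $ k = (fps_cutoff n f * fps_cutoff n g) $ k"
      using that by (simp add: fps_cutoff_left_mult_nth fps_cutoff_right_mult_nth)
    also have "\<dots> = (f' * g') $ k"
      using that by (simp add: assms fps_cutoff_left_mult_nth fps_cutoff_right_mult_nth)
    finally show ?thesis .
  qed
  then show ?thesis
    by (simp add: fps_cutoff_eq_fps_cutoff_iff)
qed

lemma fps_cutoff_power_cong:
  fixes f g :: "'a::comm_semiring_1 fps"
  assumes "fps_cutoff n f = fps_cutoff n g"
  shows "fps_cutoff n (f ^ m) = fps_cutoff n (g ^ m)"
proof (induction m)
  case (Suc m)
  show ?case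
    unfolding power_Suc by (rule fps_cutoff_mult_cong[OF assms Suc.IH])
qed simp

lemma fps_eq_X_mult_iff: "f = fps_X * g \<longleftrightarrow> f $ 0 = 0 \<and> (\<forall>k. f $ Suc k = g $ k)"
  for f g :: "'a::comm_ring_1 fps"
proof
  assume coeffs: "f $ 0 = 0 \<and> (\<forall>k. f $ Suc k = g $ k)"
  show "f = fps_X * g"
  proof (rule fps_ext)
    fix n
    show "f $ n = (fps_X * g) $ n"
      using coeffs by (cases n) simp_all
  qed
qed simp

text \<open>Writing \<open>1 + F = C + X^(k+1) G\<close>, the terms of \<open>(1 + F)^3\<close> of degree at least two in \<open>G\<close>
  start at order \<open>2 (k+1)\<close>.\<close>
lemma fps_cube_nth_Suc:
  fixes F :: "'a::comm_ring_1 fps"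
  shows "((1 + F)^3) $ Suc k
           = ((1 + fps_cutoff (Suc k) F)^3) $ Suc k + 3 * (1 + F $ 0)^2 * F $ Suc k"
proof -
  define C where "C = 1 + fps_cutoff (Suc k) F"
  define G where "G = fps_shift (Suc k) F"
  define X where "X = (fps_X :: 'a fps) ^ Suc k"
  have "1 + F = C + X * G"
    using fps_shift_cutoff'[of "Suc k" F] unfolding C_def G_def X_def
    by (metis add.assoc add.commute)
  moreover have "(C + X * G)^3 = C^3 + X * (3 * C^2 * G + X * (3 * C * G^2 + X * G^3))"
    by (simp add: algebra_simps power2_eq_square power3_eq_cube)
  ultimately have "(1 + F)^3 = C^3 + X * (3 * C^2 * G + X * (3 * C * G^2 + X * G^3))"
    by simp
  then have "((1 + F)^3) $ Suc k = (C^3) $ Suc k + 3 * (C $ 0)^2 * G $ 0"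
    by (simp add: X_def fps_X_power_mult_nth fps_nth_power_0 del: power_Suc)
  then show ?thesis
    by (simp add: C_def G_def)
qed

section \<open>The equation coefficientwise\<close>

definition series_at :: "(nat \<Rightarrow> 'a \<Rightarrow> 'b) \<Rightarrow> 'a \<Rightarrow> 'b fps" where
  "series_at A z = Abs_fps (\<lambda>k. A k z)"

definition truncate_coeffs :: "nat \<Rightarrow> (nat \<Rightarrow> 'a \<Rightarrow> 'b::zero) \<Rightarrow> nat \<Rightarrow> 'a \<Rightarrow> 'b" where
  "truncate_coeffs k A j = (if j \<le> k then A j else (\<lambda>_. 0))"

lemma series_at_nth [simp]: "series_at A z $ k = A k z"
  by (simp add: series_at_def)

lemma rational_coeffs_in_series_at:
  "rational_coeffs_in g S (series_at A) \<longleftrightarrow> (\<forall>k. rational_in g S (A k))"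
  by (simp add: rational_coeffs_in_def)

lemma series_at_truncate_coeffs:
  "series_at (truncate_coeffs k A) z = fps_cutoff (Suc k) (series_at A z)"
  by (simp add: fps_eq_iff truncate_coeffs_def)

definition ode_lhs :: "(nat \<Rightarrow> complex \<Rightarrow> complex) \<Rightarrow> complex \<Rightarrow> complex fps" where
  "ode_lhs A z = fps_const z * (1 + series_at A z)^3 - series_at A z"

definition ode_rhs :: "(nat \<Rightarrow> complex \<Rightarrow> complex) \<Rightarrow> complex \<Rightarrow> complex fps" where
  "ode_rhs A z = (1 + series_at A z) * series_at (\<lambda>k. euler_op (euler_op (A k))) z
                 - (series_at (\<lambda>k. euler_op (A k)) z)^2"

lemma formally_solves_ODE_altdef:
  "formally_solves_ODE A r \<longleftrightarrow> (\<forall>z\<in>ball 0 r. ode_lhs A z = fps_X * ode_rhs A z)"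
  by (simp add: formally_solves_ODE_def Let_def ode_lhs_def ode_rhs_def series_at_def)

lemma formally_solves_ODE_iff:
  "formally_solves_ODE A r \<longleftrightarrow>
     (\<forall>z\<in>ball 0 r. ode_lhs A z $ 0 = 0 \<and> (\<forall>k. ode_lhs A z $ Suc k = ode_rhs A z $ k))"
  unfolding formally_solves_ODE_altdef fps_eq_X_mult_iff ..

lemma ode_lhs_nth_0: "ode_lhs A z $ 0 = z * (1 + A 0 z)^3 - A 0 z"
  by (simp add: ode_lhs_def fps_nth_power_0)

lemma ode_lhs_nth_Suc:
  "ode_lhs A z $ Suc k
     = ode_lhs (truncate_coeffs k A) z $ Suc k + (3 * z * (1 + A 0 z)^2 - 1) * A (Suc k) z"
  using fps_cube_nth_Suc[of "series_at A z" k]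
  by (simp add: ode_lhs_def series_at_truncate_coeffs algebra_simps)

lemma ode_lhs_nth_cong:
  assumes "\<And>j. j \<le> k \<Longrightarrow> A j z = B j z"
  shows "ode_lhs A z $ k = ode_lhs B z $ k"
proof -
  have "fps_cutoff (Suc k) (series_at A z) = fps_cutoff (Suc k) (series_at B z)"
    using assms by (simp add: fps_cutoff_eq_fps_cutoff_iff)
  then have "fps_cutoff (Suc k) (ode_lhs A z) = fps_cutoff (Suc k) (ode_lhs B z)"
    unfolding ode_lhs_def
    by (intro fps_cutoff_diff_cong fps_cutoff_mult_cong fps_cutoff_power_cong fps_cutoff_add_cong refl)
  then show ?thesis
    by (simp add: fps_cutoff_eq_fps_cutoff_iff)
qed

lemma euler_op_cong:
  assumes "open S" "z \<in> S" "\<And>w. w \<in> S \<Longrightarrow> f w = g w"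
  shows "euler_op f z = euler_op g z"
proof -
  have "\<forall>\<^sub>F w in nhds z. f w = g w"
    using eventually_nhds_in_open[OF assms(1,2)] by (rule eventually_mono) (rule assms(3))
  then show ?thesis
    unfolding euler_op_def by (simp add: deriv_cong_ev)
qed

lemma ode_rhs_nth_cong:
  assumes S: "open S" "z \<in> S" and eq: "\<And>j w. j \<le> k \<Longrightarrow> w \<in> S \<Longrightarrow> A j w = B j w"
  shows "ode_rhs A z $ k = ode_rhs B z $ k"
proof -
  have euler: "euler_op (A j) w = euler_op (B j) w" if "j \<le> k" "w \<in> S" for j w
    by (rule euler_op_cong[OF S(1) that(2)]) (use that eq in auto)
  have euler2: "euler_op (euler_op (A j)) z = euler_op (euler_op (B j)) z" if "j \<le> k" for j
    by (rule euler_op_cong[OF S]) (use that euler in auto)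
  have "fps_cutoff (Suc k) (series_at A z) = fps_cutoff (Suc k) (series_at B z)"
    "fps_cutoff (Suc k) (series_at (\<lambda>j. euler_op (A j)) z)
       = fps_cutoff (Suc k) (series_at (\<lambda>j. euler_op (B j)) z)"
    "fps_cutoff (Suc k) (series_at (\<lambda>j. euler_op (euler_op (A j))) z)
       = fps_cutoff (Suc k) (series_at (\<lambda>j. euler_op (euler_op (B j))) z)"
    using eq S(2) euler S(2) euler2 by (simp_all add: fps_cutoff_eq_fps_cutoff_iff)
  then have "fps_cutoff (Suc k) (ode_rhs A z) = fps_cutoff (Suc k) (ode_rhs B z)"
    unfolding ode_rhs_def
    by (intro fps_cutoff_diff_cong fps_cutoff_mult_cong fps_cutoff_power_cong fps_cutoff_add_cong refl)
  then show ?thesis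
    by (simp add: fps_cutoff_eq_fps_cutoff_iff)
qed

text \<open>The coefficient of \<open>X^(k+1)\<close> in the equation is affine in \<open>A (k+1)\<close>, with all other terms
  depending on \<open>A 0, \<dots>, A k\<close> only; solving for \<open>A (k+1)\<close> gives:\<close>
definition next_coeff :: "(nat \<Rightarrow> complex \<Rightarrow> complex) \<Rightarrow> nat \<Rightarrow> complex \<Rightarrow> complex" where
  "next_coeff A k z =
     (ode_rhs A z $ k - ode_lhs (truncate_coeffs k A) z $ Suc k) / (3 * z * (1 + A 0 z)^2 - 1)"

lemma ode_nth_Suc_iff_next_coeff:
  assumes "3 * z * (1 + A 0 z)^2 - 1 \<noteq> 0"
  shows "ode_lhs A z $ Suc k = ode_rhs A z $ k \<longleftrightarrow> A (Suc k) z = next_coeff A k z"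
  using assms by (auto simp: next_coeff_def ode_lhs_nth_Suc[of A z k] field_simps)

lemma next_coeff_cong:
  assumes "open S" "z \<in> S" "\<And>j w. j \<le> k \<Longrightarrow> w \<in> S \<Longrightarrow> A j w = B j w"
  shows "next_coeff A k z = next_coeff B k z"
proof -
  have "ode_lhs (truncate_coeffs k A) z $ Suc k = ode_lhs (truncate_coeffs k B) z $ Suc k"
    using assms(2,3) by (intro ode_lhs_nth_cong) (simp add: truncate_coeffs_def)
  with ode_rhs_nth_cong[OF assms] assms(3)[of 0 z] assms(2) show ?thesis
    by (simp add: next_coeff_def)
qed

lemma rational_in_cubic_branch_id: "rational_in cubic_branch (ball 0 (4/27)) (\<lambda>z. z)"
proof (rule rational_inI[where p = "[:0, 1:]" and q = "[:1, 1:]^3"])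
  fix z :: complex assume "z \<in> ball 0 (4/27)"
  then have z: "norm z < 4/27" by simp
  show "poly ([:1, 1:]^3) (cubic_branch z) \<noteq> 0 \<and>
      z = poly [:0, 1:] (cubic_branch z) / poly ([:1, 1:]^3) (cubic_branch z)"
    using cubic_branch_neq_minus_one[OF z] cubic_branch_eq[OF z] by (simp add: field_simps)
qed

lemma rational_in_cubic_branch_euler_op:
  "rational_in cubic_branch (ball 0 (4/27)) (euler_op cubic_branch)"
  by (rule rational_inI[where p = "[:0, 1:] * [:1, 1:]" and q = "[:1, -2:]"])
     (use cubic_branch_euler_op cubic_branch_neq_half in \<open>auto simp: algebra_simps\<close>)

lemma rational_in_next_coeff:
  assumes rat: "\<And>j. rational_in cubic_branch (ball 0 (4/27)) (A j)"
    and A0: "\<And>z. norm z < 4/27 \<Longrightarrow> A 0 z = cubic_branch z"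
  shows "rational_in cubic_branch (ball 0 (4/27)) (next_coeff A k)"
proof -
  let ?R = "rational_in cubic_branch (ball 0 (4/27))"
  let ?RC = "rational_coeffs_in cubic_branch (ball 0 (4/27))"
  have euler: "?R (euler_op f)" if "?R f" for f
    using holomorphic_cubic_branch rational_in_cubic_branch_euler_op that
    by (rule rational_in_euler_op[OF open_ball])
  have "?R (truncate_coeffs k A j)" for j
    using rat by (simp add: truncate_coeffs_def rational_in_const)
  then have series: "?RC (series_at (truncate_coeffs k A))" "?RC (series_at A)"
    "?RC (series_at (\<lambda>j. euler_op (A j)))" "?RC (series_at (\<lambda>j. euler_op (euler_op (A j))))"
    using rat euler by (simp_all add: rational_coeffs_in_series_at)
  have "?RC (ode_lhs (truncate_coeffs k A))" "?RC (ode_rhs A)"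
    unfolding ode_lhs_def[abs_def] ode_rhs_def[abs_def]
    by (intro rational_coeffs_in_diff rational_coeffs_in_mult rational_coeffs_in_power
          rational_coeffs_in_add rational_coeffs_in_one rational_coeffs_in_fps_const
          rational_in_cubic_branch_id series)+
  then show ?thesis
    unfolding next_coeff_def rational_coeffs_in_def
    using A0 cubic_branch_linearization_neq_zero
    by (intro rational_in_divide rational_in_diff rational_in_mult rational_in_power rational_in_add
          rational_in_const rational_in_cubic_branch_id rat) auto
qed

text \<open>\<open>A (k+1)\<close> depends on all of \<open>A 0, \<dots>, A k\<close> and their derivatives, so the recursion runs
  over the truncated sequences.\<close>
primrec partial_solution :: "nat \<Rightarrow> nat \<Rightarrow> complex \<Rightarrow> complex" where
  "partial_solution 0 = truncate_coeffs 0 (\<lambda>_. cubic_branch)"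
| "partial_solution (Suc k) = (partial_solution k)(Suc k := next_coeff (partial_solution k) k)"

definition formal_solution :: "nat \<Rightarrow> complex \<Rightarrow> complex" where
  "formal_solution k = partial_solution k k"

lemma partial_solution_eq: "partial_solution k = truncate_coeffs k formal_solution"
proof (induction k)
  case 0
  then show ?case by (simp add: fun_eq_iff truncate_coeffs_def formal_solution_def)
next
  case (Suc k)
  then show ?case by (auto simp: fun_eq_iff truncate_coeffs_def formal_solution_def)
qed

lemma formal_solution_0: "formal_solution 0 = cubic_branch"
  by (simp add: formal_solution_def truncate_coeffs_def)

lemma formal_solution_Suc_truncated:
  "formal_solution (Suc k) = next_coeff (truncate_coeffs k formal_solution) k"
  by (simp add: formal_solution_def partial_solution_eq[symmetric])

lemma formal_solution_Suc: "formal_solution (Suc k) z = next_coeff formal_solution k z"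
  unfolding formal_solution_Suc_truncated
  by (rule next_coeff_cong[of UNIV]) (auto simp: truncate_coeffs_def)

lemma formally_solves_ODE_formal_solution: "formally_solves_ODE formal_solution (4/27)"
  unfolding formally_solves_ODE_iff
proof (intro ballI conjI allI)
  fix z :: complex and k assume "z \<in> ball 0 (4/27)"
  then have z: "norm z < 4/27" by simp
  show "ode_lhs formal_solution z $ 0 = 0"
    using cubic_branch_eq[OF z] by (simp add: ode_lhs_nth_0 formal_solution_0)
  show "ode_lhs formal_solution z $ Suc k = ode_rhs formal_solution z $ k"
    using cubic_branch_linearization_neq_zero[OF z]
    by (simp add: ode_nth_Suc_iff_next_coeff formal_solution_0 formal_solution_Suc)
qed

lemma rational_in_formal_solution:
  "rational_in cubic_branch (ball 0 (4/27)) (formal_solution k)"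
proof (induction k rule: less_induct)
  case (less k)
  show ?case
  proof (cases k)
    case 0
    then show ?thesis by (simp add: formal_solution_0 rational_in_self)
  next
    case (Suc m)
    have "rational_in cubic_branch (ball 0 (4/27)) (truncate_coeffs m formal_solution j)" for j
      using less Suc by (simp add: truncate_coeffs_def rational_in_const)
    then show ?thesis
      unfolding Suc formal_solution_Suc_truncated
      by (rule rational_in_next_coeff) (simp add: truncate_coeffs_def formal_solution_0)
  qed
qed

lemma admissible_formal_solution: "admissible formal_solution"
  using formally_solves_ODE_formal_solution holomorphic_on_rational_in[OF holomorphic_cubic_branch]
    rational_in_formal_solution
  by (simp add: admissible_def)

lemma admissible_0_eq_cubic_branch:
  assumes "admissible B" "norm z < 4/27"
  shows "B 0 z = cubic_branch z"
  using assms
  by (intro holomorphic_eq_cubic_branch[of "B 0"])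
     (auto simp: admissible_def formally_solves_ODE_iff ode_lhs_nth_0)

lemma admissible_eq_formal_solution:
  assumes B: "admissible B" and "norm z < 4/27"
  shows "B k z = formal_solution k z"
  using assms(2)
proof (induction k arbitrary: z rule: less_induct)
  case (less k)
  note B0 = admissible_0_eq_cubic_branch[OF B]
  show ?case
  proof (cases k)
    case 0
    then show ?thesis using B0 less.prems by (simp add: formal_solution_0)
  next
    case (Suc m)
    have "formally_solves_ODE B (4/27)"
      using B by (simp add: admissible_def)
    then have "B (Suc m) z = next_coeff B m z"
      using less.prems B0[OF less.prems] cubic_branch_linearization_neq_zero[OF less.prems]
      by (simp add: formally_solves_ODE_iff flip: ode_nth_Suc_iff_next_coeff)
    also have "\<dots> = next_coeff formal_solution m z"
      using less Suc by (intro next_coeff_cong[of "ball 0 (4/27)"]) auto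
    finally show ?thesis
      by (simp add: Suc formal_solution_Suc)
  qed
qed

lemma formally_solves_ODE_vanish_at_0:
  assumes "formally_solves_ODE A r" "0 < r"
  shows "A k 0 = 0"
proof -
  have "ode_lhs A 0 = fps_X * ode_rhs A 0"
    using assms by (simp add: formally_solves_ODE_altdef)
  moreover have "series_at (\<lambda>k. euler_op (A k)) 0 = 0"
    "series_at (\<lambda>k. euler_op (euler_op (A k))) 0 = 0"
    by (simp_all add: fps_eq_iff euler_op_def)
  then have "ode_rhs A 0 = 0"
    by (simp add: ode_rhs_def)
  ultimately have "series_at A 0 = 0"
    by (simp add: ode_lhs_def)
  then show ?thesis
    by (metis series_at_nth fps_zero_nth)
qed

theorem proposition2:
  shows "(\<exists>A. admissible A \<and>
            (\<forall>B. admissible B \<longrightarrow> (\<forall>k. \<forall>z \<in> ball 0 (2^2 / 3^3). B k z = A k z)))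
       \<and> (\<forall>A. admissible A \<longrightarrow>
            (\<forall>k. \<exists>p q :: complex poly.
                   \<forall>z \<in> ball 0 (2^2 / 3^3).
                     poly q (A 0 z) \<noteq> 0 \<and> A k z = poly p (A 0 z) / poly q (A 0 z))
            \<and> (\<forall>k. A k 0 = 0))"
proof (intro conjI allI impI)
  have "\<forall>B. admissible B \<longrightarrow> (\<forall>k. \<forall>z \<in> ball 0 (2^2 / 3^3). B k z = formal_solution k z)"
    using admissible_eq_formal_solution by simp
  with admissible_formal_solution show "\<exists>A. admissible A \<and>
      (\<forall>B. admissible B \<longrightarrow> (\<forall>k. \<forall>z \<in> ball 0 (2^2 / 3^3). B k z = A k z))"
    by blast
next
  fix A k assume A: "admissible A"
  have "rational_in (A 0) (ball 0 (4/27)) (A k)"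
    by (rule rational_in_cong[THEN iffD1, OF _ _ rational_in_formal_solution])
       (simp_all add: admissible_eq_formal_solution[OF A] formal_solution_0)
  then show "\<exists>p q :: complex poly. \<forall>z \<in> ball 0 (2^2 / 3^3).
               poly q (A 0 z) \<noteq> 0 \<and> A k z = poly p (A 0 z) / poly q (A 0 z)"
    by (simp add: rational_in_def)
next
  fix A k assume "admissible A"
  then show "A k 0 = 0"
    by (intro formally_solves_ODE_vanish_at_0[of A "4/27"]) (simp_all add: admissible_def)
qed

end
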